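(* Consider the mass-action system in the concentrations $x_1,\dots,x_6$ with positive reaction rate constants $k_1,\dots,k_6$: \[ \begin{aligned} \dot x_1&=-k_1x_1+k_4x_3x_5, & \dot x_2&=k_1x_1-k_2x_2+k_5x_4x_5, & \dot x_3&=k_2x_2-k_3x_3-k_4x_3x_5,\\ \dot x_4&=k_3x_3-k_5x_4x_5, & \dot x_5&=-k_4x_3x_5-k_5x_4x_5+k_6x_6, & \dot x_6&=k_4x_3x_5+k_5x_4x_5-k_6x_6, \end{aligned} \] with conservation laws $x_1+x_2+x_3+x_4=T_1$, $x_5+x_6=T_2$. Given positive reaction constants $k_1,\dots,k_6$ and positive total conservation constants $T_1,T_2$, there exist positive constants $N_1,N_2,N_3,N_4$ such that for any $\beta_1,\beta_2>0$ satisfying \[ N_1<\beta_1,\quad N_2<\beta_2,\quad \frac{\beta_2}{\beta_1}<N_3,\quad \frac{\beta_1}{\beta_2^2}<N_4, \] after replacing $k_1$ by $\bar k_1=\left(\beta_1\frac{1}{k_1+k_2}-\frac{1}{k_2}\right)^{-1}$ (which is then positive) and $k_6$ by $\bar k_6=\beta_2^{-1}k_6$, without altering $k_2,k_3,k_4,k_5,T_1,T_2$, the system has at least $3$ positive steady states, i.e. at least three points $x\in\mathbb R^6_{>0}$ with all right-hand sides zero, $x_1+x_2+x_3+x_4=T_1$ and $x_5+x_6=T_2$.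
   Context: This is the mass-action system of the hybrid histidine kinase network $X_1\xrightarrow{k_1}X_2\xrightarrow{k_2}X_3\xrightarrow{k_3}X_4$, $X_3+X_5\xrightarrow{k_4}X_1+X_6$, $X_4+X_5\xrightarrow{k_5}X_2+X_6$, $X_6\xrightarrow{k_6}X_5$. *)

theory Defs
  imports Main "HOL.Real"
begin

type_synonym state6 = "real \<times> real \<times> real \<times> real \<times> real \<times> real"

definition hhk_pos_steady ::
  "real \<Rightarrow> real \<Rightarrow> real \<Rightarrow> real \<Rightarrow> real \<Rightarrow> real \<Rightarrow> real \<Rightarrow> real \<Rightarrow> state6 \<Rightarrow> bool" where
  "hhk_pos_steady k1 k2 k3 k4 k5 k6 T1 T2 x =
    (case x of (x1, x2, x3, x4, x5, x6) \<Rightarrow>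
       x1 > 0 \<and> x2 > 0 \<and> x3 > 0 \<and> x4 > 0 \<and> x5 > 0 \<and> x6 > 0 \<and>
       - k1 * x1 + k4 * x3 * x5 = 0 \<and>
       k1 * x1 - k2 * x2 + k5 * x4 * x5 = 0 \<and>
       k2 * x2 - k3 * x3 - k4 * x3 * x5 = 0 \<and>
       k3 * x3 - k5 * x4 * x5 = 0 \<and>
       - k4 * x3 * x5 - k5 * x4 * x5 + k6 * x6 = 0 \<and>
       k4 * x3 * x5 + k5 * x4 * x5 - k6 * x6 = 0 \<and>
       x1 + x2 + x3 + x4 = T1 \<and> x5 + x6 = T2)"

end

theory Submission
  imports Defs Complex_Main
begin

text \<open>Eliminating all species but \<open>s = x5\<close>, the positive steady states with the given
  totals correspond one-to-one to the roots in \<open>(0, T2)\<close> of the cubic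
  \<open>g(s) = k6 (T2 - s) q(s) - T1 s (k4 s + k3)\<close>, where \<open>q(0) = k3/k5\<close> and \<open>q\<close> has
  leading coefficient \<open>a = k4/k1 + k4/k2\<close>. Since \<open>g 0 > 0 > g T2\<close>, the intermediate value
  theorem gives three roots once \<open>g\<close> is negative at some \<open>s1\<close> proportional to \<open>k6\<close>, which
  holds when \<open>k6\<close> and \<open>a k6\<^sup>2\<close> are small, and positive at \<open>T2 / 2\<close>, which holds when
  \<open>a k6\<close> is large. The rescaling of \<open>k1\<close> and \<open>k6\<close> turns \<open>a\<close> into \<open>k4 \<beta>1 / (k1 + k2)\<close> and
  \<open>k6\<close> into \<open>k6 / \<beta>2\<close>, so these three requirements become the bounds on \<open>\<beta>2\<close>,
  \<open>\<beta>2 / \<beta>1\<close> and \<open>\<beta>1 / \<beta>2\<^sup>2\<close>.\<close>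

lemma continuous_on_sign_change_root:
  fixes f :: "real \<Rightarrow> real"
  assumes "continuous_on {a..b} f" "a \<le> b" "f a * f b < 0"
  shows "\<exists>x. a < x \<and> x < b \<and> f x = 0"
proof -
  have "f a < 0 \<and> 0 < f b \<or> f b < 0 \<and> 0 < f a"
    using assms(3) by (auto simp: mult_less_0_iff)
  then obtain x where "a \<le> x" "x \<le> b" "f x = 0"
    using IVT'[of f a 0 b] IVT2'[of f b 0 a] assms(1,2) by force
  moreover have "f a \<noteq> 0" "f b \<noteq> 0"
    using assms(3) by auto
  ultimately show ?thesis
    by (metis order_le_less)
qed

lemma inverse_rescaled_rate_pos:
  fixes k1 k2 \<beta> :: real
  assumes "k1 > 0" "k2 > 0" "(k1 + k2) / k2 < \<beta>"
  shows "inverse (\<beta> * (1 / (k1 + k2)) - 1 / k2) > 0"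
proof -
  have "1 / k2 < \<beta> / (k1 + k2)"
    using assms by (simp add: field_simps)
  then show ?thesis
    by simp
qed

lemma divide_inverse_rescaled_rate:
  fixes k1 k2 k4 \<beta> :: real
  shows "k4 / inverse (\<beta> * (1 / (k1 + k2)) - 1 / k2) + k4 / k2 = k4 * \<beta> / (k1 + k2)"
  by (simp add: divide_inverse algebra_simps)

locale hhk_params =
  fixes k1 k2 k3 k4 k5 k6 T1 T2 :: real
  assumes pos: "k1 > 0" "k2 > 0" "k3 > 0" "k4 > 0" "k5 > 0" "k6 > 0" "T1 > 0" "T2 > 0"
begin

text \<open>At a steady state \<open>x1 = k4 x3 s / k1\<close>, \<open>x2 = x3 (k3 + k4 s) / k2\<close>,
  \<open>x4 = k3 x3 / (k5 s)\<close>, hence \<open>x1 + x2 + x3 + x4 = x3 q(s) / s\<close>. With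
  \<open>x3 = T1 s / q(s)\<close> the remaining balance \<open>k6 (T2 - s) = x3 (k4 s + k3)\<close> becomes
  \<open>cubic s = 0\<close>.\<close>
definition quad :: "real \<Rightarrow> real" where
  "quad s = (k4 / k1 + k4 / k2) * s\<^sup>2 + (1 + k3 / k2) * s + k3 / k5"

definition cubic :: "real \<Rightarrow> real" where
  "cubic s = k6 * (T2 - s) * quad s - T1 * s * (k4 * s + k3)"

definition state :: "real \<Rightarrow> state6" where
  "state s = (let x3 = T1 * s / quad s in
     (k4 * x3 * s / k1, x3 * (k3 + k4 * s) / k2, x3, k3 * x3 / (k5 * s), s, T2 - s))"

lemma quad_pos: "s \<ge> 0 \<Longrightarrow> quad s > 0"
  unfolding quad_def using pos by (intro add_nonneg_pos add_nonneg_nonneg) auto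

lemma hhk_pos_steady_state:
  assumes s: "0 < s" "s < T2" and root: "cubic s = 0"
  shows "hhk_pos_steady k1 k2 k3 k4 k5 k6 T1 T2 (state s)"
proof -
  define x3 where "x3 = T1 * s / quad s"
  have x3_pos: "x3 > 0"
    unfolding x3_def using quad_pos[of s] pos s by simp
  have total: "k4 * x3 * s / k1 + x3 * (k3 + k4 * s) / k2 + x3 + k3 * x3 / (k5 * s) = T1"
  proof -
    have "k4 * x3 * s / k1 + x3 * (k3 + k4 * s) / k2 + x3 + k3 * x3 / (k5 * s) = x3 * quad s / s"
      unfolding quad_def using pos s by (simp add: field_simps power2_eq_square)
    also have "\<dots> = T1"
      unfolding x3_def using quad_pos[of s] s by simp
    finally show ?thesis .
  qed
  have x2_pos: "x3 * (k3 + k4 * s) / k2 > 0"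
    using pos s x3_pos by (simp add: add_pos_pos)
  have exchange: "k6 * (T2 - s) = x3 * (k4 * s + k3)"
    using root quad_pos[of s] s unfolding cubic_def x3_def by (simp add: field_simps)
  show ?thesis
    unfolding hhk_pos_steady_def state_def x3_def[symmetric] Let_def split
    using pos s x3_pos x2_pos total exchange by (simp add: field_simps)
qed

lemma state_inj: "state s = state t \<Longrightarrow> s = t"
  by (simp add: state_def Let_def)

lemma cubic_neg:
  assumes "0 < s" "k6 * T2 * quad s \<le> T1 * k3 * s"
  shows "cubic s < 0"
proof -
  have "0 < k6 * s * quad s + T1 * k4 * s\<^sup>2"
    using pos assms(1) quad_pos[of s] by (intro add_pos_pos) auto
  then show ?thesis
    using assms(2) unfolding cubic_def by (simp add: algebra_simps power2_eq_square)
qed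

lemma cubic_pos_at_half:
  assumes "2 * T1 * (k4 * T2 + 2 * k3) < k6 * (k4 / k1 + k4 / k2) * T2\<^sup>2"
  shows "cubic (T2 / 2) > 0"
proof -
  have "k6 * (k4 / k1 + k4 / k2) * (T2 / 2)\<^sup>2 \<le> k6 * quad (T2 / 2)"
    unfolding quad_def using pos by (simp add: algebra_simps)
  then have "T1 * (k4 * (T2 / 2) + k3) < k6 * quad (T2 / 2)"
    using assms by (simp add: field_simps power2_eq_square)
  then have "0 < T2 / 2 * (k6 * quad (T2 / 2) - T1 * (k4 * (T2 / 2) + k3))"
    using pos by simp
  also have "\<dots> = cubic (T2 / 2)"
    unfolding cubic_def by (simp add: algebra_simps)
  finally show ?thesis .
qed

lemma cubic_three_roots:
  assumes small_s1: "4 * k6 < T1 * k5"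
    and small_lin: "4 * k6 * T2 * (1 + k3 / k2) < T1 * k3"
    and small_quad: "8 * (k4 / k1 + k4 / k2) * k6\<^sup>2 * T2\<^sup>2 < T1\<^sup>2 * k3 * k5"
    and large_lead: "2 * T1 * (k4 * T2 + 2 * k3) < k6 * (k4 / k1 + k4 / k2) * T2\<^sup>2"
  shows "\<exists>u v w. 0 < u \<and> u < v \<and> v < w \<and> w < T2 \<and> cubic u = 0 \<and> cubic v = 0 \<and> cubic w = 0"
proof -
  define s1 where "s1 = 2 * k6 * T2 / (T1 * k5)"
  have s1: "0 < s1" "s1 < T2 / 2"
    using pos small_s1 unfolding s1_def by (simp_all add: field_simps)
  have "(1 + k3 / k2) * s1 = 4 * k6 * T2 * (1 + k3 / k2) / (2 * T1 * k5)"
    unfolding s1_def using pos by (simp add: field_simps)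
  also have "\<dots> < T1 * k3 / (2 * T1 * k5)"
    using small_lin pos by (intro divide_strict_right_mono) auto
  finally have lin: "(1 + k3 / k2) * s1 < k3 / k5 / 2"
    using pos by simp
  have "(k4 / k1 + k4 / k2) * s1\<^sup>2 = 8 * (k4 / k1 + k4 / k2) * k6\<^sup>2 * T2\<^sup>2 / (2 * T1\<^sup>2 * k5\<^sup>2)"
    unfolding s1_def using pos by (simp add: field_simps power2_eq_square)
  also have "\<dots> < T1\<^sup>2 * k3 * k5 / (2 * T1\<^sup>2 * k5\<^sup>2)"
    using small_quad pos by (intro divide_strict_right_mono) auto
  finally have "(k4 / k1 + k4 / k2) * s1\<^sup>2 < k3 / k5 / 2"
    using pos by (simp add: power2_eq_square)
  with lin have "quad s1 < 2 * (k3 / k5)"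
    unfolding quad_def by linarith
  then have "k6 * T2 * quad s1 < k6 * T2 * (2 * (k3 / k5))"
    using pos by (intro mult_strict_left_mono) auto
  also have "\<dots> = T1 * k3 * s1"
    unfolding s1_def using pos by simp
  finally have neg: "cubic s1 < 0"
    using cubic_neg s1 by simp
  have "continuous_on {a..b} cubic" for a b
    unfolding cubic_def quad_def by (intro continuous_intros)
  then have root: "\<exists>x. a < x \<and> x < b \<and> cubic x = 0" if "a \<le> b" "cubic a * cubic b < 0" for a b
    using continuous_on_sign_change_root that by blast
  have "cubic 0 > 0" "cubic T2 < 0"
    unfolding cubic_def using pos quad_pos[of 0] by (simp_all add: add_pos_pos)
  moreover have "cubic (T2 / 2) > 0"
    using cubic_pos_at_half large_lead .
  ultimately obtain u v w where
      "0 < u" "u < s1" "s1 < v" "v < T2 / 2" "T2 / 2 < w" "w < T2"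
      "cubic u = 0" "cubic v = 0" "cubic w = 0"
    using root[of 0 s1] root[of s1 "T2 / 2"] root[of "T2 / 2" T2] neg s1
    by (auto simp: mult_pos_neg mult_neg_pos)
  then show ?thesis
    by (meson order.strict_trans)
qed

lemma three_pos_steady_states:
  assumes "4 * k6 < T1 * k5"
    and "4 * k6 * T2 * (1 + k3 / k2) < T1 * k3"
    and "8 * (k4 / k1 + k4 / k2) * k6\<^sup>2 * T2\<^sup>2 < T1\<^sup>2 * k3 * k5"
    and "2 * T1 * (k4 * T2 + 2 * k3) < k6 * (k4 / k1 + k4 / k2) * T2\<^sup>2"
  shows "\<exists>x y z. distinct [x, y, z] \<and> hhk_pos_steady k1 k2 k3 k4 k5 k6 T1 T2 x \<and>
    hhk_pos_steady k1 k2 k3 k4 k5 k6 T1 T2 y \<and> hhk_pos_steady k1 k2 k3 k4 k5 k6 T1 T2 z"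
proof -
  obtain u v w where "0 < u" "u < v" "v < w" "w < T2" "cubic u = 0" "cubic v = 0" "cubic w = 0"
    using cubic_three_roots assms by blast
  then show ?thesis
    by (intro exI[of _ "state u"] exI[of _ "state v"] exI[of _ "state w"])
      (auto dest: state_inj intro!: hhk_pos_steady_state)
qed

end

lemma rescaled_three_pos_steady_states:
  fixes k1 k2 k3 k4 k5 k6 T1 T2 \<beta>1 \<beta>2 :: real
  assumes pos: "k1 > 0" "k2 > 0" "k3 > 0" "k4 > 0" "k5 > 0" "k6 > 0" "T1 > 0" "T2 > 0"
    and "\<beta>1 > 0" "\<beta>2 > 0" "(k1 + k2) / k2 < \<beta>1"
    and "4 * k6 / (T1 * k5) < \<beta>2"
    and "4 * k6 * T2 * (1 + k3 / k2) / (T1 * k3) < \<beta>2"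
    and "\<beta>2 / \<beta>1 < k4 * k6 * T2\<^sup>2 / (2 * T1 * (k4 * T2 + 2 * k3) * (k1 + k2))"
    and "\<beta>1 / \<beta>2\<^sup>2 < T1\<^sup>2 * k3 * k5 * (k1 + k2) / (8 * k4 * k6\<^sup>2 * T2\<^sup>2)"
  shows "let kb1 = inverse (\<beta>1 * (1 / (k1 + k2)) - 1 / k2);
            kb6 = inverse \<beta>2 * k6
        in kb1 > 0 \<and>
           (\<exists>x y z. distinct [x, y, z] \<and> hhk_pos_steady kb1 k2 k3 k4 k5 kb6 T1 T2 x \<and>
              hhk_pos_steady kb1 k2 k3 k4 k5 kb6 T1 T2 y \<and> hhk_pos_steady kb1 k2 k3 k4 k5 kb6 T1 T2 z)"
  unfolding Let_def
proof (intro conjI hhk_params.three_pos_steady_states, unfold divide_inverse_rescaled_rate)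
  show "inverse (\<beta>1 * (1 / (k1 + k2)) - 1 / k2) > 0"
    using inverse_rescaled_rate_pos pos assms(11) by blast
  then show "hhk_params (inverse (\<beta>1 * (1 / (k1 + k2)) - 1 / k2)) k2 k3 k4 k5 (inverse \<beta>2 * k6) T1 T2"
    using assms by unfold_locales simp_all
  txt \<open>Abstracting \<open>k1 + k2\<close> and \<open>k4 T2 + 2 k3\<close> stops \<open>field_simps\<close> from
    distributing them, so that their positivity stays visible to it.\<close>
  define K where "K = k1 + k2"
  define L where "L = k4 * T2 + 2 * k3"
  have "K > 0" "L > 0"
    unfolding K_def L_def using pos by (simp_all add: add_pos_pos)
  then show "4 * (inverse \<beta>2 * k6) < T1 * k5"
    "4 * (inverse \<beta>2 * k6) * T2 * (1 + k3 / k2) < T1 * k3"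
    "8 * (k4 * \<beta>1 / (k1 + k2)) * (inverse \<beta>2 * k6)\<^sup>2 * T2\<^sup>2 < T1\<^sup>2 * k3 * k5"
    "2 * T1 * (k4 * T2 + 2 * k3) < inverse \<beta>2 * k6 * (k4 * \<beta>1 / (k1 + k2)) * T2\<^sup>2"
    unfolding K_def[symmetric] L_def[symmetric] using assms[folded K_def L_def]
    by (simp_all add: field_simps power2_eq_square)
qed

theorem proposition3p5:
  fixes k1 k2 k3 k4 k5 k6 T1 T2 :: real
  assumes "k1 > 0" "k2 > 0" "k3 > 0" "k4 > 0" "k5 > 0" "k6 > 0" "T1 > 0" "T2 > 0"
  shows "\<exists>N1 N2 N3 N4 :: real. N1 > 0 \<and> N2 > 0 \<and> N3 > 0 \<and> N4 > 0 \<and>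
    (\<forall>\<beta>1 \<beta>2 :: real. \<beta>1 > 0 \<longrightarrow> \<beta>2 > 0 \<longrightarrow>
       N1 < \<beta>1 \<longrightarrow> N2 < \<beta>2 \<longrightarrow> \<beta>2 / \<beta>1 < N3 \<longrightarrow> \<beta>1 / \<beta>2 ^ 2 < N4 \<longrightarrow>
       (let kb1 = inverse (\<beta>1 * (1 / (k1 + k2)) - 1 / k2);
            kb6 = inverse \<beta>2 * k6
        in kb1 > 0 \<and>
           (\<exists>x y z. distinct [x, y, z] \<and> hhk_pos_steady kb1 k2 k3 k4 k5 kb6 T1 T2 x \<and>
              hhk_pos_steady kb1 k2 k3 k4 k5 kb6 T1 T2 y \<and> hhk_pos_steady kb1 k2 k3 k4 k5 kb6 T1 T2 z)))"
proof -
  define N2a where "N2a = 4 * k6 / (T1 * k5)"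
  define N2b where "N2b = 4 * k6 * T2 * (1 + k3 / k2) / (T1 * k3)"
  define N3 where "N3 = k4 * k6 * T2\<^sup>2 / (2 * T1 * (k4 * T2 + 2 * k3) * (k1 + k2))"
  define N4 where "N4 = T1\<^sup>2 * k3 * k5 * (k1 + k2) / (8 * k4 * k6\<^sup>2 * T2\<^sup>2)"
  have "N2a > 0" "N2b > 0"
    unfolding N2a_def N2b_def using assms by (simp_all add: add_pos_pos)
  moreover have "(k1 + k2) / k2 > 0" "N3 > 0" "N4 > 0"
    unfolding N3_def N4_def using assms by (simp_all add: add_pos_pos)
  moreover have "N2a < \<beta>2" "N2b < \<beta>2" if "N2a + N2b < \<beta>2" for \<beta>2
    using that \<open>N2a > 0\<close> \<open>N2b > 0\<close> by linarith+
  ultimately show ?thesis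
    by (intro exI[of _ "(k1 + k2) / k2"] exI[of _ "N2a + N2b"] exI[of _ N3] exI[of _ N4]
        conjI allI impI
        rescaled_three_pos_steady_states[OF assms, folded N2a_def N2b_def N3_def N4_def])
      simp_all
qed

end
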